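(* The Lie algebra $\Lambda(\mathbb{Q}\mathrm{Par}_2)$ is generated by $1$, $x_1x_2$, $x_1^2x_2$, $x_1x_2^2$, and $x_1^3x_2+x_1x_2^3$.
   Context: The nonsymmetric operad $\mathrm{Par}_2$: $\mathrm{Par}_2((0))=\emptyset$, $\mathrm{Par}_2((1))=\{1\}$, and for $m\ge2$, $\mathrm{Par}_2((m))=\{x_1^ax_2^b: a,b\ge1,a+b=m\}$ (order-preserving partitions of $\{1,\dots,m\}$ into two consecutive blocks of sizes $a,b$). Partial composition: if $x_l$ is the variable whose block contains $s$, then $(x_1^{a_1}x_2^{a_2})\circ_s d$ is obtained by raising the exponent of $x_l$ by $j-1$, where $j$ is the degree of the monomial $d$; $1$ is a two-sided unit. $\Lambda(\mathbb{Q}\mathrm{Par}_2)=\bigoplus_{m\ge1}\mathbb{Q}\mathrm{Par}_2((m))$ with Lie bracket $[c,d]=\sum_{t=1}^{j}d\circ_tc-\sum_{s=1}^{k}c\circ_sd$ for $c$ of arity $k$, $d$ of arity $j$. *)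

theory Defs
  imports Complex_Main
begin

text \<open>Basis of Par_2: the unit 1 (arity 1) and monomials x_1^a x_2^b with a,b \<ge> 1.\<close>
datatype par2 = One | Mon nat nat

fun valid :: "par2 \<Rightarrow> bool" where
  "valid One = True"
| "valid (Mon a b) = (1 \<le> a \<and> 1 \<le> b)"

fun arity :: "par2 \<Rightarrow> nat" where
  "arity One = 1"
| "arity (Mon a b) = a + b"

fun pcomp :: "par2 \<Rightarrow> nat \<Rightarrow> par2 \<Rightarrow> par2" where
  "pcomp One s d = d"
| "pcomp (Mon a b) s One = Mon a b"
| "pcomp (Mon a b) s (Mon a' b') =
     (if s \<le> a then Mon (a + (a' + b') - 1) b else Mon a (b + (a' + b') - 1))"

definition supp :: "(par2 \<Rightarrow> rat) \<Rightarrow> par2 set" where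
  "supp u = {c. u c \<noteq> 0}"

definition LQPar2 :: "(par2 \<Rightarrow> rat) set" where
  "LQPar2 = {u. finite (supp u) \<and> (\<forall>c. u c \<noteq> 0 \<longrightarrow> valid c)}"

definition brb :: "par2 \<Rightarrow> par2 \<Rightarrow> par2 \<Rightarrow> rat" where
  "brb c d e = of_nat (card {t \<in> {1..arity d}. pcomp d t c = e})
             - of_nat (card {s \<in> {1..arity c}. pcomp c s d = e})"

definition bracket :: "(par2 \<Rightarrow> rat) \<Rightarrow> (par2 \<Rightarrow> rat) \<Rightarrow> (par2 \<Rightarrow> rat)" where
  "bracket u v = (\<lambda>e. \<Sum>c\<in>supp u. \<Sum>d\<in>supp v. u c * v d * brb c d e)"

definition basisvec :: "par2 \<Rightarrow> (par2 \<Rightarrow> rat)" where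
  "basisvec c = (\<lambda>e. if e = c then 1 else 0)"

inductive_set lie_gen :: "(par2 \<Rightarrow> rat) set \<Rightarrow> (par2 \<Rightarrow> rat) set" for S where
  base: "u \<in> S \<Longrightarrow> u \<in> lie_gen S"
| zero: "(\<lambda>_. 0) \<in> lie_gen S"
| add: "u \<in> lie_gen S \<Longrightarrow> v \<in> lie_gen S \<Longrightarrow> (\<lambda>e. u e + v e) \<in> lie_gen S"
| smult: "u \<in> lie_gen S \<Longrightarrow> (\<lambda>e. r * u e) \<in> lie_gen S"
| br: "u \<in> lie_gen S \<Longrightarrow> v \<in> lie_gen S \<Longrightarrow> bracket u v \<in> lie_gen S"

end

theory Submission
  imports Defs
begin

text \<open>
  In degree at most 4 the generators together with [x_1 x_2, x_1^2 x_2] and [x_1 x_2, x_1 x_2^2]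
  span everything. In degree n + 1 \<ge> 5, with e_i = x_1^i x_2^(n+1-i), the brackets [x_1 x_2, x_1^a x_2^(n-a)] =
  a e_(a+1) + (n - a) e_a - e_1 - e_n express every e_i, modulo the generated algebra, through e_1
  and e_n, with coefficients built from the signed binomials (-1)^(i-1) C(n-1, i-1). For i = n this
  forces e_n \<equiv> \<plusminus>e_1, and the bracket [x_1^2 x_2, x_1 x_2^(n-2)] then reduces to a nonzero multiple
  of e_1. Induction on the degree gives every monomial; the reverse inclusion is closure of
  finitely supported vectors on valid monomials under the bracket.
\<close>

lemma supp_basisvec: "supp (basisvec c) = {c}"
  unfolding supp_def basisvec_def by auto

lemma bracket_basisvec: "bracket (basisvec c) (basisvec d) = brb c d"
  unfolding bracket_def supp_basisvec by (simp add: basisvec_def)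

lemma card_two_blocks:
  "card {t \<in> {1..r + s}. (if t \<le> r then A else B) = e}
     = (if A = e then r else 0) + (if B = e then s else 0)"
proof -
  have "{t \<in> {1..r + s}. (if t \<le> r then A else B) = e}
      = (if A = e then {1..r} else {}) \<union> (if B = e then {r+1..r + s} else {})" by auto
  then show ?thesis by (simp add: card_Un_disjoint)
qed

lemma bracket_basisvec_Mon:
  "bracket (basisvec (Mon p q)) (basisvec (Mon r s)) e =
     of_nat r * basisvec (Mon (r + (p + q) - 1) s) e + of_nat s * basisvec (Mon r (s + (p + q) - 1)) e
   - of_nat p * basisvec (Mon (p + (r + s) - 1) q) e - of_nat q * basisvec (Mon p (q + (r + s) - 1)) e"
proof -
  have indicator: "(of_nat (if A = e then k else 0) :: rat) = of_nat k * basisvec A e" for A k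
    by (simp add: basisvec_def)
  show ?thesis
    unfolding bracket_basisvec brb_def arity.simps pcomp.simps card_two_blocks of_nat_add indicator
    by (simp only: diff_diff_eq)
qed

lemma basisvec_in_LQPar2: "valid c \<Longrightarrow> basisvec c \<in> LQPar2"
  by (simp add: LQPar2_def supp_basisvec) (simp add: basisvec_def)

lemma LQPar2_iff: "u \<in> LQPar2 \<longleftrightarrow> finite (supp u) \<and> supp u \<subseteq> {c. valid c}"
  unfolding LQPar2_def supp_def by blast

lemma LQPar2_subset: "v \<in> LQPar2 \<Longrightarrow> supp u \<subseteq> supp v \<Longrightarrow> u \<in> LQPar2"
  unfolding LQPar2_iff by (blast intro: finite_subset)

lemma LQPar2_add:
  assumes "u \<in> LQPar2" "v \<in> LQPar2"
  shows "(\<lambda>e. u e + v e) \<in> LQPar2"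
proof -
  have "supp (\<lambda>e. u e + v e) \<subseteq> supp u \<union> supp v" unfolding supp_def by auto
  with assms show ?thesis unfolding LQPar2_iff by (meson finite_UnI finite_subset le_sup_iff subset_trans)
qed

lemma LQPar2_smult: "u \<in> LQPar2 \<Longrightarrow> (\<lambda>e. r * u e) \<in> LQPar2"
  by (erule LQPar2_subset) (auto simp: supp_def)

lemma valid_pcomp: "valid c \<Longrightarrow> valid d \<Longrightarrow> valid (pcomp c s d)"
  by (cases c; cases d) auto

lemma supp_bracket_subset:
  "supp (bracket u v) \<subseteq>
     (\<Union>c\<in>supp u. \<Union>d\<in>supp v. (\<lambda>t. pcomp d t c) ` {1..arity d} \<union> (\<lambda>t. pcomp c t d) ` {1..arity c})"
proof
  fix e assume "e \<in> supp (bracket u v)"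
  then have "(\<Sum>c\<in>supp u. \<Sum>d\<in>supp v. u c * v d * brb c d e) \<noteq> 0"
    by (simp add: supp_def bracket_def)
  then obtain c where c: "c \<in> supp u" and sum_c: "(\<Sum>d\<in>supp v. u c * v d * brb c d e) \<noteq> 0"
    by (rule sum.not_neutral_contains_not_neutral)
  from sum_c obtain d where d: "d \<in> supp v" and "u c * v d * brb c d e \<noteq> 0"
    by (rule sum.not_neutral_contains_not_neutral)
  then have "{t \<in> {1..arity d}. pcomp d t c = e} \<noteq> {} \<or> {t \<in> {1..arity c}. pcomp c t d = e} \<noteq> {}"
    unfolding brb_def by (metis card.empty diff_self mult_zero_right)
  then have "e \<in> (\<lambda>t. pcomp d t c) ` {1..arity d} \<union> (\<lambda>t. pcomp c t d) ` {1..arity c}"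
    by blast
  with c d show "e \<in> (\<Union>c\<in>supp u. \<Union>d\<in>supp v. (\<lambda>t. pcomp d t c) ` {1..arity d} \<union> (\<lambda>t. pcomp c t d) ` {1..arity c})"
    by blast
qed

lemma LQPar2_bracket:
  assumes u: "u \<in> LQPar2" and v: "v \<in> LQPar2"
  shows "bracket u v \<in> LQPar2"
proof -
  let ?P = "\<Union>c\<in>supp u. \<Union>d\<in>supp v. (\<lambda>t. pcomp d t c) ` {1..arity d} \<union> (\<lambda>t. pcomp c t d) ` {1..arity c}"
  have sub: "supp (bracket u v) \<subseteq> ?P" by (rule supp_bracket_subset)
  have fin: "finite ?P"
    using u v by (simp add: LQPar2_iff)
  have val: "?P \<subseteq> {c. valid c}"
    using u v unfolding LQPar2_iff by (auto intro!: valid_pcomp)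
  show ?thesis unfolding LQPar2_iff
  proof
    show "finite (supp (bracket u v))" using sub fin by (rule finite_subset)
    show "supp (bracket u v) \<subseteq> {c. valid c}" using sub val by (rule order_trans)
  qed
qed

lemma lie_gen_subset_LQPar2:
  assumes "S \<subseteq> LQPar2"
  shows "lie_gen S \<subseteq> LQPar2"
proof
  fix u assume "u \<in> lie_gen S"
  then show "u \<in> LQPar2"
  proof induction
    case (base u)
    then show ?case using assms by blast
  next
    case zero
    show ?case by (simp add: LQPar2_def supp_def)
  qed (simp_all add: LQPar2_add LQPar2_smult LQPar2_bracket)
qed

lemma lie_gen_sum:
  "finite A \<Longrightarrow> (\<And>c. c \<in> A \<Longrightarrow> f c \<in> lie_gen S) \<Longrightarrow> (\<lambda>e. \<Sum>c\<in>A. r c * f c e) \<in> lie_gen S"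
proof (induction A rule: finite_induct)
  case empty
  then show ?case by (simp add: lie_gen.zero)
next
  case (insert c A)
  then show ?case by (simp add: lie_gen.add lie_gen.smult)
qed

lemma LQPar2_subset_lie_gen:
  assumes "\<And>c. valid c \<Longrightarrow> basisvec c \<in> lie_gen S"
  shows "LQPar2 \<subseteq> lie_gen S"
proof
  fix u assume u: "u \<in> LQPar2"
  have "u = (\<lambda>e. \<Sum>c\<in>supp u. u c * basisvec c e)"
  proof
    fix e
    have "(\<Sum>c\<in>supp u. u c * basisvec c e) = (\<Sum>c\<in>supp u. if c = e then u c else 0)"
      by (rule sum.cong) (auto simp: basisvec_def)
    with u show "u e = (\<Sum>c\<in>supp u. u c * basisvec c e)" by (simp add: LQPar2_def supp_def)
  qed
  also have "\<dots> \<in> lie_gen S"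
    using u assms by (intro lie_gen_sum) (auto simp: LQPar2_def supp_def)
  finally show "u \<in> lie_gen S" .
qed

lemma lie_gen_lincombI:
  assumes "snd ` set xs \<subseteq> lie_gen S" and "c \<noteq> 0"
    and "\<And>e. c * w e = (\<Sum>(a, u)\<leftarrow>xs. a * u e)"
  shows "w \<in> lie_gen S"
proof -
  have "(\<lambda>e. \<Sum>(a, u)\<leftarrow>xs. a * u e) \<in> lie_gen S"
    using assms(1)
  proof (induction xs)
    case Nil
    then show ?case by (simp add: lie_gen.zero)
  next
    case (Cons x xs)
    then show ?case by (cases x) (simp add: lie_gen.add lie_gen.smult)
  qed
  then have "(\<lambda>e. inverse c * (c * w e)) \<in> lie_gen S"
    unfolding assms(3) by (rule lie_gen.smult)
  with \<open>c \<noteq> 0\<close> show ?thesis by (simp add: mult.assoc[symmetric])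
qed

definition mon_vec :: "nat \<Rightarrow> nat \<Rightarrow> par2 \<Rightarrow> rat" where
  "mon_vec n i = basisvec (Mon i (n + 1 - i))"

definition signed_binom :: "nat \<Rightarrow> nat \<Rightarrow> rat" where
  "signed_binom n i = (-1) ^ (i - 1) * of_nat ((n - 1) choose (i - 1))"

text \<open>
  Writing e_i = mon_vec n i and \<mu>_i = signed_binom n i, the brackets with x_1 x_2 give
  n e_i \<equiv> (n \<mu>_i + 1 - \<mu>_i) e_1 + (1 - \<mu>_i) e_n modulo the generated algebra, because
  a \<mu>_(a+1) + (n - a) \<mu>_a = 0; mon_defect n i is the difference of the two sides.
\<close>

definition mon_defect :: "nat \<Rightarrow> nat \<Rightarrow> par2 \<Rightarrow> rat" where
  "mon_defect n i = (\<lambda>e. of_nat n * mon_vec n i e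
     - (of_nat n * signed_binom n i + 1 - signed_binom n i) * mon_vec n 1 e
     - (1 - signed_binom n i) * mon_vec n n e)"

lemma signed_binom_recurrence:
  assumes "1 \<le> a"
  shows "of_nat a * signed_binom n (a + 1) + of_nat (n - a) * signed_binom n a = 0"
proof -
  obtain k where k: "a = Suc k" using assms by (cases a) auto
  have "Suc k * ((n - 1) choose Suc k) = (n - 1 - k) * ((n - 1) choose k)"
    by (simp only: binomial_absorption binomial_absorb_comp)
  then have "(of_nat (Suc k) * of_nat ((n - 1) choose Suc k) :: rat)
      = of_nat (n - Suc k) * of_nat ((n - 1) choose k)"
    by (metis diff_Suc_eq_diff_pred of_nat_mult)
  then show ?thesis unfolding signed_binom_def k by simp
qed

lemma bracket_x1x2_Mon:
  assumes "a \<le> n"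
  shows "bracket (basisvec (Mon 1 1)) (basisvec (Mon a (n - a))) e =
    of_nat a * mon_vec n (a + 1) e + of_nat (n - a) * mon_vec n a e - mon_vec n n e - mon_vec n 1 e"
  using assms by (simp add: bracket_basisvec_Mon mon_vec_def Suc_diff_le)

lemma bracket_x1sq_x2_Mon:
  assumes "2 \<le> n"
  shows "bracket (basisvec (Mon 2 1)) (basisvec (Mon 1 (n - 2))) e =
    mon_vec n 3 e + of_nat (n - 2) * mon_vec n 1 e - 2 * mon_vec n n e - mon_vec n 2 e"
proof -
  obtain k where "n = k + 2" using assms by (metis le_add_diff_inverse2)
  then show ?thesis by (simp add: bracket_basisvec_Mon mon_vec_def)
qed

context
  fixes S :: "(par2 \<Rightarrow> rat) set" and n :: nat
  assumes lower: "\<And>a b. 1 \<le> a \<Longrightarrow> 1 \<le> b \<Longrightarrow> a + b \<le> n \<Longrightarrow> basisvec (Mon a b) \<in> lie_gen S"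
begin

lemma mon_defect_in_lie_gen:
  assumes "2 \<le> n" "1 \<le> i" "i \<le> n"
  shows "mon_defect n i \<in> lie_gen S"
  using \<open>1 \<le> i\<close> \<open>i \<le> n\<close>
proof (induction i rule: nat_induct_at_least)
  case base
  show ?case
    by (rule lie_gen_lincombI[where xs = "[]" and c = 1]) (simp_all add: mon_defect_def signed_binom_def)
next
  case (Suc a)
  let ?phi = "bracket (basisvec (Mon 1 1)) (basisvec (Mon a (n - a)))"
  have "?phi \<in> lie_gen S"
    using Suc.hyps Suc.prems \<open>2 \<le> n\<close> by (intro lie_gen.br lower) auto
  moreover have "mon_defect n a \<in> lie_gen S"
    using Suc by simp
  moreover have "of_nat a * mon_defect n (Suc a) e
      = of_nat n * ?phi e - of_nat (n - a) * mon_defect n a e" for e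
    using signed_binom_recurrence[OF Suc.hyps, of n] Suc.prems
    unfolding bracket_x1x2_Mon[OF Suc_leD[OF Suc.prems]] mon_defect_def Suc_eq_plus1
    by (simp add: of_nat_diff) algebra
  ultimately show ?case
    using Suc.hyps
    by (intro lie_gen_lincombI[where xs = "[(of_nat n, ?phi), (- of_nat (n - a), mon_defect n a)]"
          and c = "of_nat a"]) auto
qed

lemma mon_vec_last_minus_first_in_lie_gen:
  assumes "3 \<le> n"
  shows "(\<lambda>e. mon_vec n n e - signed_binom n n * mon_vec n 1 e) \<in> lie_gen S"
proof -
  define \<sigma> where "\<sigma> = signed_binom n n"
  have \<sigma>: "\<sigma> = 1 \<or> \<sigma> = -1"
    by (simp add: \<sigma>_def signed_binom_def minus_one_power_iff)
  show ?thesis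
    unfolding \<sigma>_def[symmetric]
  proof (rule lie_gen_lincombI[where xs = "[(1, mon_defect n n)]" and c = "of_nat n - 1 + \<sigma>"])
    show "snd ` set [(1, mon_defect n n)] \<subseteq> lie_gen S"
      using mon_defect_in_lie_gen assms by simp
    show "of_nat n - 1 + \<sigma> \<noteq> 0"
      using \<sigma> assms by auto
    show "(of_nat n - 1 + \<sigma>) * (mon_vec n n e - \<sigma> * mon_vec n 1 e)
        = (\<Sum>(a, u)\<leftarrow>[(1, mon_defect n n)]. a * u e)" for e
      using \<sigma> by (auto simp: mon_defect_def \<sigma>_def[symmetric] algebra_simps)
  qed
qed

lemma mon_vec_ends_in_lie_gen:
  assumes n: "4 \<le> n"
  shows "mon_vec n 1 \<in> lie_gen S \<and> mon_vec n n \<in> lie_gen S"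
proof -
  define \<sigma> where "\<sigma> = signed_binom n n"
  have \<sigma>: "\<sigma> = 1 \<or> \<sigma> = -1"
    by (simp add: \<sigma>_def signed_binom_def minus_one_power_iff)
  define r where "r = (\<lambda>e. mon_vec n n e - \<sigma> * mon_vec n 1 e)"
  have r: "r \<in> lie_gen S"
    unfolding r_def \<sigma>_def using mon_vec_last_minus_first_in_lie_gen n by simp
  have D: "mon_defect n i \<in> lie_gen S" if "1 \<le> i" "i \<le> n" for i
    using mon_defect_in_lie_gen n that by simp
  have "2 \<le> n" using n by simp
  define v where "v = bracket (basisvec (Mon 2 1)) (basisvec (Mon 1 (n - 2)))"
  have v: "v \<in> lie_gen S"
    unfolding v_def using n by (intro lie_gen.br lower) auto
  txt \<open>Modulo the defects and r, the bracket v reduces to \<kappa> e_1, and \<kappa> > 0.\<close>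
  define T where "T = signed_binom n 3 - signed_binom n 2"
  have "signed_binom n 2 = - of_nat (n - 1)" and "signed_binom n 3 \<ge> 0"
    by (simp_all add: signed_binom_def)
  then have T: "T \<ge> of_nat n - 1"
    using n by (simp add: T_def of_nat_diff)
  define \<kappa> where "\<kappa> = (of_nat n - 1 - \<sigma>) * T + of_nat n * (of_nat n - 2 - 2 * \<sigma>)"
  have "0 < (of_nat n - 1 - \<sigma>) * T" and "0 \<le> (of_nat n :: rat) * (of_nat n - 2 - 2 * \<sigma>)"
    using \<sigma> n T by (auto intro!: mult_pos_pos mult_nonneg_nonneg)
  then have "\<kappa> \<noteq> 0" unfolding \<kappa>_def by linarith
  have first: "mon_vec n 1 \<in> lie_gen S"
  proof (rule lie_gen_lincombI[where c = \<kappa>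
        and xs = "[(of_nat n, v), (-1, mon_defect n 3), (1, mon_defect n 2), (T + 2 * of_nat n, r)]"])
    show "snd ` set [(of_nat n, v), (-1, mon_defect n 3), (1, mon_defect n 2), (T + 2 * of_nat n, r)]
        \<subseteq> lie_gen S"
      using D v r n by simp
    show "\<kappa> * mon_vec n 1 e = (\<Sum>(a, u)\<leftarrow>[(of_nat n, v), (-1, mon_defect n 3),
        (1, mon_defect n 2), (T + 2 * of_nat n, r)]. a * u e)" for e
      using n unfolding v_def bracket_x1sq_x2_Mon[OF \<open>2 \<le> n\<close>]
      by (simp add: \<kappa>_def T_def r_def mon_defect_def of_nat_diff algebra_simps)
  qed (fact \<open>\<kappa> \<noteq> 0\<close>)
  have "mon_vec n n \<in> lie_gen S"
  proof (rule lie_gen_lincombI[where xs = "[(1, r), (\<sigma>, mon_vec n 1)]" and c = 1])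
    show "snd ` set [(1, r), (\<sigma>, mon_vec n 1)] \<subseteq> lie_gen S" using r first by simp
  qed (simp_all add: r_def)
  with first show ?thesis ..
qed

lemma mon_vec_in_lie_gen:
  assumes "4 \<le> n" and "1 \<le> i" "i \<le> n"
  shows "mon_vec n i \<in> lie_gen S"
proof -
  let ?\<mu> = "signed_binom n i"
  let ?xs = "[(1, mon_defect n i), (of_nat n * ?\<mu> + 1 - ?\<mu>, mon_vec n 1), (1 - ?\<mu>, mon_vec n n)]"
  show ?thesis
  proof (rule lie_gen_lincombI[where xs = ?xs and c = "of_nat n"])
    show "snd ` set ?xs \<subseteq> lie_gen S"
      using mon_defect_in_lie_gen mon_vec_ends_in_lie_gen assms by simp
  qed (use assms in \<open>simp_all add: mon_defect_def\<close>)
qed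

end

lemma degree4_basisvecs_in_lie_gen:
  assumes x1x2: "basisvec (Mon 1 1) \<in> lie_gen S"
    and x1sq_x2: "basisvec (Mon 2 1) \<in> lie_gen S"
    and x1_x2sq: "basisvec (Mon 1 2) \<in> lie_gen S"
    and degree4: "(\<lambda>e. basisvec (Mon 3 1) e + basisvec (Mon 1 3) e) \<in> lie_gen S"
  shows "basisvec (Mon 2 2) \<in> lie_gen S" "basisvec (Mon 3 1) \<in> lie_gen S"
    "basisvec (Mon 1 3) \<in> lie_gen S"
proof -
  define X where "X = bracket (basisvec (Mon 1 1)) (basisvec (Mon 2 1))"
  define Y where "Y = bracket (basisvec (Mon 1 1)) (basisvec (Mon 1 2))"
  have X: "X e = basisvec (Mon 3 1) e + basisvec (Mon 2 2) e - basisvec (Mon 1 3) e"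
    and Y: "Y e = basisvec (Mon 2 2) e + basisvec (Mon 1 3) e - basisvec (Mon 3 1) e" for e
    by (simp_all add: X_def Y_def bracket_basisvec_Mon numeral_eq_Suc)
  have XY: "X \<in> lie_gen S" "Y \<in> lie_gen S"
    unfolding X_def Y_def using x1x2 x1sq_x2 x1_x2sq by (auto intro: lie_gen.br)
  show "basisvec (Mon 2 2) \<in> lie_gen S"
    by (rule lie_gen_lincombI[where xs = "[(1, X), (1, Y)]" and c = 2]) (use XY in \<open>simp_all add: X Y\<close>)
  show "basisvec (Mon 3 1) \<in> lie_gen S"
    by (rule lie_gen_lincombI[where c = 4
          and xs = "[(1, X), (-1, Y), (2, \<lambda>e. basisvec (Mon 3 1) e + basisvec (Mon 1 3) e)]"])
      (use XY degree4 in \<open>simp_all add: X Y\<close>)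
  show "basisvec (Mon 1 3) \<in> lie_gen S"
    by (rule lie_gen_lincombI[where c = 4
          and xs = "[(-1, X), (1, Y), (2, \<lambda>e. basisvec (Mon 3 1) e + basisvec (Mon 1 3) e)]"])
      (use XY degree4 in \<open>simp_all add: X Y\<close>)
qed

lemma basisvec_Mon_in_lie_gen:
  assumes x1x2: "basisvec (Mon 1 1) \<in> lie_gen S"
    and x1sq_x2: "basisvec (Mon 2 1) \<in> lie_gen S"
    and x1_x2sq: "basisvec (Mon 1 2) \<in> lie_gen S"
    and degree4: "(\<lambda>e. basisvec (Mon 3 1) e + basisvec (Mon 1 3) e) \<in> lie_gen S"
    and "1 \<le> a" "1 \<le> b"
  shows "basisvec (Mon a b) \<in> lie_gen S"
  using \<open>1 \<le> a\<close> \<open>1 \<le> b\<close>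
proof (induction "a + b" arbitrary: a b rule: less_induct)
  case less
  show ?case
  proof (cases "a + b \<le> 4")
    case True
    then consider "a = 1" "b = 1" | "a = 2" "b = 1" | "a = 1" "b = 2"
      | "a = 2" "b = 2" | "a = 3" "b = 1" | "a = 1" "b = 3"
      using less.prems by linarith
    then show ?thesis
      using x1x2 x1sq_x2 x1_x2sq degree4_basisvecs_in_lie_gen[OF assms(1-4)] by cases simp_all
  next
    case False
    with less have "mon_vec (a + b - 1) a \<in> lie_gen S"
      by (intro mon_vec_in_lie_gen) auto
    then show ?thesis
      using less.prems by (simp add: mon_vec_def)
  qed
qed

theorem corollary6p3:
  shows "lie_gen {basisvec One, basisvec (Mon 1 1), basisvec (Mon 2 1), basisvec (Mon 1 2),
                  (\<lambda>e. basisvec (Mon 3 1) e + basisvec (Mon 1 3) e)} = LQPar2"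
  (is "lie_gen ?S = LQPar2")
proof
  show "lie_gen ?S \<subseteq> LQPar2"
    by (rule lie_gen_subset_LQPar2) (simp add: basisvec_in_LQPar2 LQPar2_add)
  show "LQPar2 \<subseteq> lie_gen ?S"
  proof (rule LQPar2_subset_lie_gen)
    fix c :: par2
    assume "valid c"
    then show "basisvec c \<in> lie_gen ?S"
    proof (cases c)
      case (Mon a b)
      show ?thesis
        unfolding Mon by (rule basisvec_Mon_in_lie_gen) (use \<open>valid c\<close> Mon in \<open>simp_all add: lie_gen.base\<close>)
    qed (simp add: lie_gen.base)
  qed
qed

end
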